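(* For all integers $N\ge 1$ and $k\ge 1$, $$\mathbb{E}[\mathcal{R}_{k+1}(N+1)]=\sum_{1\le j_1<j_2<\dots<j_k\le N}\frac{1}{j_1 j_2\cdots j_k},$$ (the sum being $0$ if $k>N$); moreover $\mathcal{R}_1(N)=1$ for all $N\ge1$. In particular $\mathbb{E}[\mathcal{R}_{N}(N)]=1/(N-1)!$ and $\mathbb{E}[\mathcal{R}_3(N+1)]=\tfrac12\big(H_N^2-H_N^{(2)}\big)$, where $H_N=\sum_{i\le N}1/i$, $H_N^{(2)}=\sum_{i\le N}1/i^2$.
   Context: A random recursive hypergraph (RRH) is the random hypergraph process defined as follows. At size $N=1$ it has vertex set $\{v_1\}$ and edge set $\{\{v_1\}\}$. Given the hypergraph of size $N$ (vertices $v_1,\dots,v_N$, exactly $N$ edges), one chooses an existing edge $e$ uniformly at random, independently of the past, and adds a new vertex $v_{N+1}$ together with the new edge $e\cup\{v_{N+1}\}$. The rank of a vertex $v$ is $\min\{|e| : v\in e\}$. $\mathcal{R}_k(N)$ denotes the number of vertices of rank $k$ in the RRH of size $N$ (equivalently, the number of edges of size $k$). *)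

theory Defs
  imports "HOL-Probability.Probability"
begin

text \<open>A hypergraph is represented by its set of edges; vertex v_i is the natural number i.
  All edges of the RRH are distinct (each new edge contains a fresh vertex), so the
  edge set determines the hypergraph and uniform choice of an edge is pmf_of_set.\<close>

type_synonym hgraph = "nat set set"

text \<open>rrh N: the random recursive hypergraph of size N (meaningful for N >= 1).\<close>
fun rrh :: "nat \<Rightarrow> hgraph pmf" where
  "rrh 0 = return_pmf {}"
| "rrh (Suc 0) = return_pmf {{1}}"
| "rrh (Suc (Suc n)) =
     bind_pmf (rrh (Suc n))
       (\<lambda>E. map_pmf (\<lambda>e. insert (insert (Suc (Suc n)) e) E) (pmf_of_set E))"

definition vertices :: "hgraph \<Rightarrow> nat set" where
  "vertices E = \<Union>E"

definition rank :: "hgraph \<Rightarrow> nat \<Rightarrow> nat" where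
  "rank E v = Min {card e | e. e \<in> E \<and> v \<in> e}"

definition Rk :: "nat \<Rightarrow> hgraph \<Rightarrow> nat" where
  "Rk k E = card {v \<in> vertices E. rank E v = k}"

definition ERk :: "nat \<Rightarrow> nat \<Rightarrow> real" where
  "ERk k N = measure_pmf.expectation (rrh N) (\<lambda>E. real (Rk k E))"

end

theory Submission
  imports Defs
begin

text \<open>
  Every vertex v of the RRH is the largest element of the edge e_v created together with it,
  and every edge containing v has grown out of e_v; hence the rank of v is the size of e_v and
  R_k counts the edges of size k. A step of the process picks one of the N edges uniformly
  and adds an edge one larger, so
  E R_{k+1}(N+1) = E R_{k+1}(N) + E R_k(N) / N.
  This is the recursion e_k(x_1..x_N) = e_k(x_1..x_{N-1}) + x_N e_{k-1}(x_1..x_{N-1}) of the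
  elementary symmetric polynomials at x_j = 1/j, and the special cases are
  e_N = x_1 * ... * x_N and 2 e_2 = (\<Sigma> x_j)^2 - \<Sigma> x_j^2.
\<close>

definition esym :: "nat \<Rightarrow> 'a set \<Rightarrow> ('a \<Rightarrow> 'b::comm_semiring_1) \<Rightarrow> 'b" where
  "esym k A f = (\<Sum>S | S \<subseteq> A \<and> card S = k. \<Prod>x\<in>S. f x)"

lemma esym_empty: "esym k {} f = (if k = 0 then 1 else 0)"
proof -
  have subsets: "{S. S \<subseteq> {} \<and> card S = k} = (if k = 0 then {{}} else {})"
    by auto
  show ?thesis
    unfolding esym_def subsets by simp
qed

lemma esym_0: "finite A \<Longrightarrow> esym 0 A f = 1"
proof -
  assume "finite A"
  then have "{S. S \<subseteq> A \<and> card S = 0} = {{}}"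
    by (auto dest: finite_subset)
  then show ?thesis by (simp add: esym_def)
qed

lemma subsets_card_Suc_insert:
  assumes "finite A" "a \<notin> A"
  shows "{S. S \<subseteq> insert a A \<and> card S = Suc k}
       = {S. S \<subseteq> A \<and> card S = Suc k} \<union> insert a ` {S. S \<subseteq> A \<and> card S = k}"
proof (intro equalityI subsetI)
  fix S assume S: "S \<in> {S. S \<subseteq> insert a A \<and> card S = Suc k}"
  then have "finite S" using assms(1) by (auto dest: finite_subset)
  show "S \<in> {S. S \<subseteq> A \<and> card S = Suc k} \<union> insert a ` {S. S \<subseteq> A \<and> card S = k}"
  proof (cases "a \<in> S")
    case True
    then have "S = insert a (S - {a})" "S - {a} \<subseteq> A" "card (S - {a}) = k"
      using S \<open>finite S\<close> by auto
    then show ?thesis by blast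
  qed (use S in auto)
next
  fix S assume "S \<in> {S. S \<subseteq> A \<and> card S = Suc k} \<union> insert a ` {S. S \<subseteq> A \<and> card S = k}"
  then show "S \<in> {S. S \<subseteq> insert a A \<and> card S = Suc k}"
    using assms by (auto simp: card_insert_if finite_subset)
qed

lemma esym_insert:
  assumes "finite A" "a \<notin> A"
  shows "esym (Suc k) (insert a A) f = esym (Suc k) A f + f a * esym k A f"
proof -
  let ?P = "\<lambda>k. {S. S \<subseteq> A \<and> card S = k}"
  have fin: "finite (?P k)" for k
    using assms(1) by (auto intro: finite_subset[of _ "Pow A"])
  have inj: "inj_on (insert a) (?P k)"
    using assms(2) by (auto simp: inj_on_def)
  have "esym (Suc k) (insert a A) f = esym (Suc k) A f + (\<Sum>S \<in> insert a ` ?P k. \<Prod>x\<in>S. f x)"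
    unfolding esym_def subsets_card_Suc_insert[OF assms] using fin assms(2)
    by (subst sum.union_disjoint) auto
  also have "(\<Sum>S \<in> insert a ` ?P k. \<Prod>x\<in>S. f x) = f a * esym k A f"
    unfolding esym_def sum.reindex[OF inj] sum_distrib_left using assms
    by (intro sum.cong refl) (metis comp_apply mem_Collect_eq prod.insert finite_subset subsetD)
  finally show ?thesis .
qed

lemma esym_card: "finite A \<Longrightarrow> esym (card A) A f = prod f A"
proof -
  assume "finite A"
  then have "{S. S \<subseteq> A \<and> card S = card A} = {A}"
    by (auto dest: card_subset_eq)
  then show ?thesis by (simp add: esym_def)
qed

lemma esym_1: "finite A \<Longrightarrow> esym 1 A f = sum f A"
  by (induction A rule: finite_induct) (simp_all add: esym_empty esym_insert esym_0 add.commute)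

lemma esym_2:
  fixes f :: "'a \<Rightarrow> 'b::comm_ring_1"
  assumes "finite A"
  shows "2 * esym 2 A f = (sum f A)\<^sup>2 - (\<Sum>x\<in>A. (f x)\<^sup>2)"
  using assms
proof (induction A rule: finite_induct)
  case (insert a A)
  have "esym 2 (insert a A) f = esym 2 A f + f a * sum f A"
    using esym_insert[OF insert(1,2), of 1 f, unfolded esym_1[OF insert(1)]]
    by (simp add: numeral_2_eq_2)
  then show ?case
    using insert by (simp add: power2_eq_square algebra_simps)
qed (simp add: esym_empty)

locale recursive_hgraph =
  fixes N :: nat and E :: hgraph
  assumes finite_edges: "finite E"
    and finite_edge: "e \<in> E \<Longrightarrow> finite e"
    and edge_subset: "e \<in> E \<Longrightarrow> e \<subseteq> {1..N}"
    and one_in_edge: "e \<in> E \<Longrightarrow> 1 \<in> e"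
    and bij_Max: "bij_betw Max E {1..N}"
    and creating_edge_subset: "e \<in> E \<Longrightarrow> v \<in> e \<Longrightarrow> \<exists>e'\<in>E. Max e' = v \<and> e' \<subseteq> e"
begin

lemma Max_in_edge: "e \<in> E \<Longrightarrow> Max e \<in> e"
  using finite_edge one_in_edge by (intro Max_in) auto

lemma card_edges: "card E = N"
  using bij_betw_same_card[OF bij_Max] by simp

lemma rank_Max:
  assumes e: "e \<in> E"
  shows "rank E (Max e) = card e"
  unfolding rank_def
proof (rule Min_eqI)
  show "finite {card x |x. x \<in> E \<and> Max e \<in> x}"
    using finite_edges by simp
  show "card e \<in> {card x |x. x \<in> E \<and> Max e \<in> x}"
    using e Max_in_edge by blast
next
  fix y assume "y \<in> {card x |x. x \<in> E \<and> Max e \<in> x}"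
  then obtain x where x: "x \<in> E" "Max e \<in> x" "y = card x" by blast
  then obtain e' where e': "e' \<in> E" "Max e' = Max e" "e' \<subseteq> x"
    using creating_edge_subset by blast
  have "e' = e"
    using bij_Max e e' by (auto simp: bij_betw_def dest: inj_onD)
  then show "card e \<le> y"
    using e' x finite_edge by (simp add: card_mono)
qed

lemma vertices_eq_Max_image: "vertices E = Max ` E"
  unfolding vertices_def using Max_in_edge creating_edge_subset by blast

lemma Rk_eq_card_edges: "Rk k E = card {e \<in> E. card e = k}"
proof -
  have "{v \<in> vertices E. rank E v = k} = Max ` {e \<in> E. card e = k}"
    using vertices_eq_Max_image rank_Max by auto
  moreover have "inj_on Max {e \<in> E. card e = k}"
    using bij_Max by (auto simp: bij_betw_def intro: inj_on_subset)
  ultimately show ?thesis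
    unfolding Rk_def by (simp add: card_image)
qed

lemma Rk_0: "Rk 0 E = 0"
proof -
  have "{e \<in> E. card e = 0} = {}"
    using finite_edge one_in_edge by fastforce
  then show ?thesis
    unfolding Rk_eq_card_edges by (simp only: card.empty)
qed

lemma Rk_1:
  assumes "N \<ge> 1"
  shows "Rk 1 E = 1"
proof -
  have "1 \<in> Max ` E"
    using bij_Max assms by (simp add: bij_betw_def)
  then obtain e where e: "e \<in> E" "Max e = 1"
    by (metis imageE)
  have "e = {1}"
    using e finite_edge one_in_edge edge_subset by (fastforce dest: Max_ge)
  then have one_edge: "{1} \<in> E"
    using e by simp
  have "{x \<in> E. card x = 1} = {{1}}"
  proof (intro equalityI subsetI)
    fix x assume "x \<in> {x \<in> E. card x = 1}"
    then show "x \<in> {{1}}"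
      using one_in_edge by (metis (mono_tags) mem_Collect_eq card_1_singletonE singletonD singletonI)
  qed (use one_edge in simp)
  then show ?thesis by (simp add: Rk_eq_card_edges)
qed

lemma insert_edge:
  assumes e: "e \<in> E"
  shows "recursive_hgraph (Suc N) (insert (insert (Suc N) e) E)"
proof -
  let ?e' = "insert (Suc N) e"
  have Max_new: "Max ?e' = Suc N"
    using e finite_edge edge_subset by (intro Max_eqI) force+
  have new: "?e' \<notin> E"
    using edge_subset by fastforce
  have "bij_betw Max (E \<union> {?e'}) ({1..N} \<union> {Max ?e'})"
    using bij_Max new Max_new by (intro notIn_Un_bij_betw) auto
  then have bij: "bij_betw Max (insert ?e' E) {1..Suc N}"
    by (simp add: Max_new atLeastAtMostSuc_conv)
  show ?thesis
  proof
    show "finite (insert ?e' E)"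
      using finite_edges by simp
    show "bij_betw Max (insert ?e' E) {1..Suc N}"
      by (rule bij)
  next
    fix x assume x: "x \<in> insert ?e' E"
    show "finite x"
      using x e finite_edge by auto
    show "x \<subseteq> {1..Suc N}"
      using x edge_subset[OF e] edge_subset by fastforce
    show "1 \<in> x"
      using x e one_in_edge by auto
  next
    fix x v assume "x \<in> insert ?e' E" "v \<in> x"
    then show "\<exists>e'\<in>insert ?e' E. Max e' = v \<and> e' \<subseteq> x"
      using creating_edge_subset[OF e] creating_edge_subset Max_new by (cases "x = ?e'") fastforce+
  qed
qed

lemma Rk_insert_edge:
  assumes e: "e \<in> E"
  shows "Rk k (insert (insert (Suc N) e) E) = Rk k E + (if Suc (card e) = k then 1 else 0)"
proof -
  interpret new: recursive_hgraph "Suc N" "insert (insert (Suc N) e) E"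
    using insert_edge[OF e] .
  have fresh: "Suc N \<notin> e" "insert (Suc N) e \<notin> E"
    using e edge_subset by fastforce+
  then have "card (insert (Suc N) e) = Suc (card e)"
    using e finite_edge by simp
  then have "{x \<in> insert (insert (Suc N) e) E. card x = k} =
      (if Suc (card e) = k then insert (insert (Suc N) e) {x \<in> E. card x = k} else {x \<in> E. card x = k})"
    by auto
  then show ?thesis
    using fresh finite_edges by (simp add: Rk_eq_card_edges new.Rk_eq_card_edges)
qed

end

lemma recursive_hgraph_rrh: "E \<in> set_pmf (rrh (Suc n)) \<Longrightarrow> recursive_hgraph (Suc n) E"
proof (induction n arbitrary: E)
  case 0
  then show ?case
    by unfold_locales (auto simp: bij_betw_def)
next
  case (Suc n)
  obtain E0 where E0: "E0 \<in> set_pmf (rrh (Suc n))"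
    and E: "E \<in> set_pmf (map_pmf (\<lambda>e. insert (insert (Suc (Suc n)) e) E0) (pmf_of_set E0))"
    using Suc.prems by (auto simp: set_bind_pmf)
  interpret recursive_hgraph "Suc n" E0
    using Suc.IH[OF E0] .
  have "E0 \<noteq> {}"
    using card_edges by auto
  then obtain e where "e \<in> E0" "E = insert (insert (Suc (Suc n)) e) E0"
    using E finite_edges by auto
  then show ?case
    using insert_edge by simp
qed

lemma card_edges_rrh: "E \<in> set_pmf (rrh (Suc n)) \<Longrightarrow> card E = Suc n"
  using recursive_hgraph.card_edges[OF recursive_hgraph_rrh] .

lemma finite_set_pmf_rrh: "finite (set_pmf (rrh n))"
proof (induction n rule: rrh.induct)
  case (3 n)
  have "finite E" "E \<noteq> {}" if "E \<in> set_pmf (rrh (Suc n))" for E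
    using card_edges_rrh[OF that] by (auto intro: card_ge_0_finite)
  then show ?case
    using "3" by (auto simp: set_bind_pmf)
qed simp_all

lemma expectation_rrh_Suc_Suc:
  fixes f :: "hgraph \<Rightarrow> real"
  shows "measure_pmf.expectation (rrh (Suc (Suc n))) f =
    measure_pmf.expectation (rrh (Suc n))
      (\<lambda>E. (\<Sum>e\<in>E. f (insert (insert (Suc (Suc n)) e) E)) / real (Suc n))"
    (is "_ = measure_pmf.expectation ?p ?g")
proof -
  let ?new = "\<lambda>E e. insert (insert (Suc (Suc n)) e) E"
  have uniform_edge: "finite (set_pmf (map_pmf (?new E) (pmf_of_set E)))"
    "measure_pmf.expectation (map_pmf (?new E) (pmf_of_set E)) f = ?g E"
    if "E \<in> set_pmf ?p" for E
  proof -
    have "finite E" "E \<noteq> {}"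
      using card_edges_rrh[OF that] by (auto intro: card_ge_0_finite)
    then show "finite (set_pmf (map_pmf (?new E) (pmf_of_set E)))"
      "measure_pmf.expectation (map_pmf (?new E) (pmf_of_set E)) f = ?g E"
      using card_edges_rrh[OF that] by (simp_all add: integral_pmf_of_set)
  qed
  have "measure_pmf.expectation (rrh (Suc (Suc n))) f = (\<Sum>E\<in>set_pmf ?p. pmf ?p E *\<^sub>R ?g E)"
    unfolding rrh.simps using finite_set_pmf_rrh uniform_edge
    by (subst pmf_expectation_bind[of "set_pmf ?p"]) auto
  also have "\<dots> = measure_pmf.expectation ?p ?g"
    using finite_set_pmf_rrh by (subst integral_measure_pmf[of "set_pmf ?p"]) auto
  finally show ?thesis .
qed

lemma ERk_Suc_Suc:
  "ERk (Suc k) (Suc (Suc n)) = ERk (Suc k) (Suc n) + ERk k (Suc n) / real (Suc n)"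
proof -
  have step: "(\<Sum>e\<in>E. real (Rk (Suc k) (insert (insert (Suc (Suc n)) e) E))) / real (Suc n)
      = real (Rk (Suc k) E) + real (Rk k E) / real (Suc n)"
    if "E \<in> set_pmf (rrh (Suc n))" for E
  proof -
    interpret recursive_hgraph "Suc n" E
      using recursive_hgraph_rrh[OF that] .
    have "(\<Sum>e\<in>E. real (Rk (Suc k) (insert (insert (Suc (Suc n)) e) E)))
        = (\<Sum>e\<in>E. real (Rk (Suc k) E) + (if card e = k then 1 else 0))"
      by (intro sum.cong) (simp_all add: Rk_insert_edge)
    also have "\<dots> = real (Suc n) * real (Rk (Suc k) E) + real (Rk k E)"
      using finite_edges by (simp add: sum.distrib card_edges Rk_eq_card_edges[of k] sum.If_cases Int_def)
    finally show ?thesis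
      by (simp add: field_simps)
  qed
  have "ERk (Suc k) (Suc (Suc n)) = measure_pmf.expectation (rrh (Suc n))
      (\<lambda>E. real (Rk (Suc k) E) + real (Rk k E) / real (Suc n))"
    unfolding ERk_def expectation_rrh_Suc_Suc
    by (intro integral_cong_AE AE_pmfI step) simp_all
  also have "\<dots> = ERk (Suc k) (Suc n) + ERk k (Suc n) / real (Suc n)"
    unfolding ERk_def by (simp add: integrable_measure_pmf_finite finite_set_pmf_rrh)
  finally show ?thesis .
qed

lemma ERk_0_Suc: "ERk 0 (Suc n) = 0"
  unfolding ERk_def
  by (intro integral_eq_zero_AE AE_pmfI) (simp add: recursive_hgraph.Rk_0[OF recursive_hgraph_rrh])

lemma ERk_Suc_1: "ERk (Suc k) (Suc 0) = (if k = 0 then 1 else 0)"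
proof -
  interpret recursive_hgraph 1 "{{1}}"
    by unfold_locales (auto simp: bij_betw_def)
  have "Rk (Suc k) {{1}} = (if k = 0 then 1 else 0)"
    using Rk_1 unfolding Rk_eq_card_edges by (cases k) auto
  then show ?thesis
    by (simp add: ERk_def)
qed

lemma ERk_eq_esym: "ERk (Suc k) (Suc N) = esym k {1..N} (\<lambda>j. 1 / real j)"
  (is "_ = esym k {1..N} ?f")
proof (induction N arbitrary: k)
  case 0
  show ?case
    by (simp add: ERk_Suc_1 esym_empty)
next
  case (Suc N)
  have interval: "{1..Suc N} = insert (Suc N) {1..N}"
    by auto
  show ?case
  proof (cases k)
    case 0
    then show ?thesis
      using ERk_Suc_Suc[of 0 N] Suc.IH[of 0] by (simp add: ERk_0_Suc esym_0)
  next
    case (Suc j)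
    have "ERk (Suc k) (Suc (Suc N)) = ERk (Suc k) (Suc N) + ERk (Suc j) (Suc N) / real (Suc N)"
      using ERk_Suc_Suc[of k N] Suc by simp
    also have "\<dots> = esym k {1..N} ?f + ?f (Suc N) * esym j {1..N} ?f"
      unfolding Suc.IH by simp
    also have "\<dots> = esym k {1..Suc N} ?f"
      unfolding interval Suc by (rule esym_insert[symmetric]) auto
    finally show ?thesis .
  qed
qed

theorem mainTheorem9:
  shows "(\<forall>N k. N \<ge> 1 \<longrightarrow> k \<ge> 1 \<longrightarrow>
            ERk (k + 1) (N + 1) =
              (\<Sum>S \<in> {S. S \<subseteq> {1..N} \<and> card S = k}. 1 / (\<Prod>j\<in>S. real j)))
       \<and> (\<forall>N. N \<ge> 1 \<longrightarrow> (\<forall>E \<in> set_pmf (rrh N). Rk 1 E = 1))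
       \<and> (\<forall>N. N \<ge> 1 \<longrightarrow> ERk N N = 1 / fact (N - 1))
       \<and> (\<forall>N. N \<ge> 1 \<longrightarrow>
            ERk 3 (N + 1) = ((\<Sum>i=1..N. 1 / real i)\<^sup>2 - (\<Sum>i=1..N. 1 / (real i)\<^sup>2)) / 2)"
proof (intro conjI allI impI ballI)
  fix N k :: nat
  show "ERk (k + 1) (N + 1) = (\<Sum>S \<in> {S. S \<subseteq> {1..N} \<and> card S = k}. 1 / (\<Prod>j\<in>S. real j))"
    by (simp add: ERk_eq_esym esym_def prod_dividef)
next
  fix N :: nat and E assume N: "N \<ge> 1" and E: "E \<in> set_pmf (rrh N)"
  obtain n where "N = Suc n"
    using N by (cases N) auto
  then interpret recursive_hgraph N E
    using recursive_hgraph_rrh E by simp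
  show "Rk 1 E = 1"
    using Rk_1 N .
next
  fix N :: nat assume "N \<ge> 1"
  then obtain n where "N = Suc n"
    by (cases N) auto
  then show "ERk N N = 1 / fact (N - 1)"
    using esym_card[of "{1..n}" "\<lambda>j. 1 / real j"]
    by (simp add: ERk_eq_esym fact_prod prod_dividef)
next
  fix N :: nat
  have "ERk 3 (N + 1) = esym 2 {1..N} (\<lambda>j. 1 / real j)"
    using ERk_eq_esym[of 2 N] by (simp add: numeral_3_eq_3 numeral_2_eq_2)
  then show "ERk 3 (N + 1) = ((\<Sum>i=1..N. 1 / real i)\<^sup>2 - (\<Sum>i=1..N. 1 / (real i)\<^sup>2)) / 2"
    using esym_2[of "{1..N}" "\<lambda>j. 1 / real j"] by (simp add: power_one_over)
qed

end
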